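(* Let $n\ge1$ and on $\mathbb{D}^n$ (coordinates $\alpha_0,\dots,\alpha_{n-1}$) use the Poisson bracket described in the context. Let $\Phi_n,\Psi_n$ be the monic first and second kind orthogonal polynomials on the unit circle and $\Phi_n^*,\Psi_n^*$ their reversed polynomials. Then for all $z,w$: \[ \{\Phi_n(z),\Phi_n(w)\}=\{\Psi_n(z),\Psi_n(w)\}=\{\Phi_n^*(z),\Phi_n^*(w)\}=\{\Psi_n^*(z),\Psi_n^*(w)\}=0, \] \[ \{\Phi_n^*(z),\Psi_n^*(w)\}=-\frac{i}{2}\Bigl[\bigl(\Phi_n^*(z)\Psi_n^*(w)-\Psi_n^*(z)\Phi_n^*(w)\bigr)\frac{z+w}{z-w}-\Phi_n^*(z)\Phi_n^*(w)+\Psi_n^*(z)\Psi_n^*(w)\Bigr], \] \[ \{\Phi_n(z),\Psi_n(w)\}=-\frac{i}{2}\Bigl[\bigl(\Phi_n(z)\Psi_n(w)-\Psi_n(z)\Phi_n(w)\bigr)\frac{z+w}{z-w}+\Phi_n(z)\Phi_n(w)-\Psi_n(z)\Psi_n(w)\Bigr]. \]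
   Context: Let $\rho_j=(1-|\alpha_j|^2)^{1/2}$; the Poisson bracket is $\{f,g\}=\sum_{j=0}^{n-1}i\rho_j^2\bigl(\frac{\partial f}{\partial\bar\alpha_j}\frac{\partial g}{\partial\alpha_j}-\frac{\partial f}{\partial\alpha_j}\frac{\partial g}{\partial\bar\alpha_j}\bigr)$ (Wirtinger derivatives), i.e. $\{\alpha_j,\alpha_k\}=0$, $\{\alpha_j,\bar\alpha_k\}=-i\rho_j^2\delta_{jk}$; $z,w$ are held fixed. $\Phi_0=1$, $\Phi_{k+1}(z)=z\Phi_k(z)-\bar\alpha_k\Phi_k^*(z)$, $\Phi_k^*(z)=z^k\overline{\Phi_k(1/\bar z)}$; $\Psi_k$ satisfies the same recursion with each $\alpha_j$ replaced by $-\alpha_j$, and $\Psi_k^*(z)=z^k\overline{\Psi_k(1/\bar z)}$. The identities are identities of polynomials in $z,w$. *)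

theory Defs
  imports "HOL-Analysis.Analysis" "HOL-Computational_Algebra.Polynomial"
begin

text \<open>Reversed polynomial of degree (at most) k: z^k * conj(p(1/conj z)),
  written out on coefficients.\<close>
definition rev_poly :: "nat \<Rightarrow> complex poly \<Rightarrow> complex poly" where
  "rev_poly k p = (\<Sum>i\<le>k. monom (cnj (coeff p i)) (k - i))"

fun opuc :: "(nat \<Rightarrow> complex) \<Rightarrow> nat \<Rightarrow> complex poly" where
  "opuc a 0 = 1"
| "opuc a (Suc k) = pCons 0 (opuc a k) - smult (cnj (a k)) (rev_poly k (opuc a k))"

definition Phi :: "(nat \<Rightarrow> complex) \<Rightarrow> nat \<Rightarrow> complex \<Rightarrow> complex" where
  "Phi a k z = poly (opuc a k) z"
definition PhiStar :: "(nat \<Rightarrow> complex) \<Rightarrow> nat \<Rightarrow> complex \<Rightarrow> complex" where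
  "PhiStar a k z = poly (rev_poly k (opuc a k)) z"
definition Psi :: "(nat \<Rightarrow> complex) \<Rightarrow> nat \<Rightarrow> complex \<Rightarrow> complex" where
  "Psi a k z = poly (opuc (\<lambda>j. - a j) k) z"
definition PsiStar :: "(nat \<Rightarrow> complex) \<Rightarrow> nat \<Rightarrow> complex \<Rightarrow> complex" where
  "PsiStar a k z = poly (rev_poly k (opuc (\<lambda>j. - a j) k)) z"

definition dRe :: "((nat \<Rightarrow> complex) \<Rightarrow> complex) \<Rightarrow> nat \<Rightarrow> (nat \<Rightarrow> complex) \<Rightarrow> complex" where
  "dRe f j a = vector_derivative (\<lambda>t::real. f (a(j := a j + of_real t))) (at 0)"
definition dIm :: "((nat \<Rightarrow> complex) \<Rightarrow> complex) \<Rightarrow> nat \<Rightarrow> (nat \<Rightarrow> complex) \<Rightarrow> complex" where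
  "dIm f j a = vector_derivative (\<lambda>t::real. f (a(j := a j + \<i> * of_real t))) (at 0)"
definition wirt :: "((nat \<Rightarrow> complex) \<Rightarrow> complex) \<Rightarrow> nat \<Rightarrow> (nat \<Rightarrow> complex) \<Rightarrow> complex" where
  "wirt f j a = (dRe f j a - \<i> * dIm f j a) / 2"
definition wirt_bar :: "((nat \<Rightarrow> complex) \<Rightarrow> complex) \<Rightarrow> nat \<Rightarrow> (nat \<Rightarrow> complex) \<Rightarrow> complex" where
  "wirt_bar f j a = (dRe f j a + \<i> * dIm f j a) / 2"

definition pbracket :: "nat \<Rightarrow> ((nat \<Rightarrow> complex) \<Rightarrow> complex) \<Rightarrow> ((nat \<Rightarrow> complex) \<Rightarrow> complex)
    \<Rightarrow> (nat \<Rightarrow> complex) \<Rightarrow> complex" where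
  "pbracket n f g a = (\<Sum>j<n. \<i> * of_real (1 - (norm (a j))\<^sup>2) *
      (wirt_bar f j a * wirt g j a - wirt f j a * wirt_bar g j a))"

end

(*
  Each of Phi_(k+1), Phi*_(k+1), Psi_(k+1), Psi*_(k+1) is e X_k + c(alpha_k) Y_k, where X_k, Y_k
  are degree-k polynomials of the same kind, which depend only on alpha_0, ..., alpha_(k-1), and
  c is R-linear in alpha_k.  The bracket is a sum of coordinatewise biderivations, so the bracket
  of two polynomials of level k+1 is the bilinear combination of the brackets at level k plus a
  single contribution of the coordinate alpha_k.  After clearing the denominator z - w the claimed
  formulas are polynomial identities, and the brackets within the Phi-family, as well as those
  between the Phi- and the Psi-family, satisfy a closed induction of this kind.  The brackets
  within the Psi-family are those of the Phi-family at -alpha, because alpha |-> -alpha exchanges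
  Phi and Psi and preserves the bracket.
*)

theory Submission
  imports Defs
begin

lemma coeff_rev_poly:
  "coeff (rev_poly k p) m = (if m \<le> k then cnj (coeff p (k - m)) else 0)"
proof -
  have "coeff (rev_poly k p) m = (\<Sum>i\<le>k. if i = k - m \<and> m \<le> k then cnj (coeff p i) else 0)"
    unfolding rev_poly_def coeff_sum coeff_monom by (intro sum.cong) auto
  then show ?thesis by simp
qed

lemma degree_opuc: "degree (opuc a k) \<le> k"
proof (induction k)
  case (Suc k)
  have "degree (rev_poly k (opuc a k)) \<le> k"
    by (rule degree_le) (simp add: coeff_rev_poly)
  with Suc show ?case
    by (auto intro!: degree_diff_le order.trans[OF degree_smult_le] simp: degree_pCons_eq_if)
qed simp

lemma rev_poly_opuc_Suc:
  "rev_poly (Suc k) (opuc a (Suc k)) = rev_poly k (opuc a k) - smult (a k) (pCons 0 (opuc a k))"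
proof (rule poly_eqI)
  fix m
  have high: "coeff (opuc a k) i = 0" if "k < i" for i
    using degree_opuc[of a k] that by (simp add: coeff_eq_0)
  show "coeff (rev_poly (Suc k) (opuc a (Suc k))) m
      = coeff (rev_poly k (opuc a k) - smult (a k) (pCons 0 (opuc a k))) m"
    by (cases m) (auto simp: coeff_rev_poly coeff_pCons high Suc_diff_le diff_Suc split: nat.split)
qed

lemma opuc_cong: "(\<And>j. j < n \<Longrightarrow> a j = b j) \<Longrightarrow> opuc a n = opuc b n"
  by (induction n) auto

lemma Psi_eq_Phi_uminus: "Psi b n z = Phi (- b) n z"
  and PsiStar_eq_PhiStar_uminus: "PsiStar b n z = PhiStar (- b) n z"
  by (simp_all add: Psi_def Phi_def PsiStar_def PhiStar_def fun_Compl_def)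

lemma Phi_0 [simp]: "Phi b 0 z = 1"
  and PhiStar_0 [simp]: "PhiStar b 0 z = 1"
  by (simp_all add: Phi_def PhiStar_def rev_poly_def)

lemma Phi_Suc: "Phi b (Suc n) z = z * Phi b n z - cnj (b n) * PhiStar b n z"
  by (simp add: Phi_def PhiStar_def)

lemma PhiStar_Suc: "PhiStar b (Suc n) z = PhiStar b n z - b n * z * Phi b n z"
  unfolding Phi_def PhiStar_def rev_poly_opuc_Suc by (simp add: algebra_simps)

lemma Psi_Suc: "Psi b (Suc n) z = z * Psi b n z + cnj (b n) * PsiStar b n z"
  by (simp add: Psi_eq_Phi_uminus PsiStar_eq_PhiStar_uminus Phi_Suc)

lemma PsiStar_Suc: "PsiStar b (Suc n) z = PsiStar b n z + b n * z * Psi b n z"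
  by (simp add: Psi_eq_Phi_uminus PsiStar_eq_PhiStar_uminus PhiStar_Suc)

lemma Phi_fun_upd: "n \<le> k \<Longrightarrow> Phi (b(k := x)) n z = Phi b n z"
  and PhiStar_fun_upd: "n \<le> k \<Longrightarrow> PhiStar (b(k := x)) n z = PhiStar b n z"
proof -
  assume "n \<le> k"
  then have "opuc (b(k := x)) n = opuc b n" by (intro opuc_cong) auto
  then show "Phi (b(k := x)) n z = Phi b n z" "PhiStar (b(k := x)) n z = PhiStar b n z"
    by (simp_all add: Phi_def PhiStar_def)
qed

text \<open>\<open>D\<close> and \<open>Db\<close> play the roles of \<open>\<partial>f/\<partial>\<alpha>\<^sub>j\<close> and \<open>\<partial>f/\<partial>\<alpha>\<^sub>j\<^sup>*\<close>: the derivative of \<open>f\<close>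
  along the direction \<open>c\<close> is \<open>c D + c\<^sup>* Db\<close>.\<close>

definition has_wirtinger_derivs ::
    "((nat \<Rightarrow> complex) \<Rightarrow> complex) \<Rightarrow> nat \<Rightarrow> (nat \<Rightarrow> complex) \<Rightarrow> complex \<Rightarrow> complex \<Rightarrow> bool" where
  "has_wirtinger_derivs f j a D Db \<longleftrightarrow> (\<forall>c \<in> {1, \<i>}.
     ((\<lambda>t::real. f (a(j := a j + c * of_real t))) has_vector_derivative c * D + cnj c * Db) (at 0))"

definition wirtinger_differentiable ::
    "((nat \<Rightarrow> complex) \<Rightarrow> complex) \<Rightarrow> nat \<Rightarrow> (nat \<Rightarrow> complex) \<Rightarrow> bool" where
  "wirtinger_differentiable f j a \<longleftrightarrow> (\<exists>D Db. has_wirtinger_derivs f j a D Db)"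

lemma has_wirtinger_derivs_wirt:
  assumes "has_wirtinger_derivs f j a D Db"
  shows "wirt f j a = D" and "wirt_bar f j a = Db"
proof -
  have re: "dRe f j a = D + Db" and im: "dIm f j a = \<i> * D - \<i> * Db"
    using assms unfolding has_wirtinger_derivs_def dRe_def dIm_def
    by (auto intro: vector_derivative_at)
  show "wirt f j a = D" and "wirt_bar f j a = Db"
    unfolding wirt_def wirt_bar_def re im by (simp_all add: algebra_simps)
qed

lemma wirtinger_differentiableD:
  "wirtinger_differentiable f j a \<Longrightarrow> has_wirtinger_derivs f j a (wirt f j a) (wirt_bar f j a)"
  unfolding wirtinger_differentiable_def using has_wirtinger_derivs_wirt by metis

lemma has_wirtinger_derivs_indep:
  "(\<And>x. f (a(j := x)) = f a) \<Longrightarrow> has_wirtinger_derivs f j a 0 0"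
  unfolding has_wirtinger_derivs_def by simp

lemma has_wirtinger_derivs_const: "has_wirtinger_derivs (\<lambda>_. c) j a 0 0"
  by (rule has_wirtinger_derivs_indep) (rule refl)

lemma has_wirtinger_derivs_linear_coord:
  "has_wirtinger_derivs (\<lambda>b. \<gamma> * b j + \<delta> * cnj (b j)) j a \<gamma> \<delta>"
  unfolding has_wirtinger_derivs_def by (auto intro!: derivative_eq_intros)

lemma has_wirtinger_derivs_coord:
  "has_wirtinger_derivs (\<lambda>b. b k) j a (if j = k then 1 else 0) 0"
  unfolding has_wirtinger_derivs_def
  by (cases "j = k") (auto intro!: derivative_eq_intros)

lemma has_wirtinger_derivs_cnj_coord:
  "has_wirtinger_derivs (\<lambda>b. cnj (b k)) j a 0 (if j = k then 1 else 0)"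
  unfolding has_wirtinger_derivs_def
  by (cases "j = k") (auto intro!: derivative_eq_intros)

lemma has_wirtinger_derivs_add:
  "has_wirtinger_derivs f j a D1 Db1 \<Longrightarrow> has_wirtinger_derivs g j a D2 Db2 \<Longrightarrow>
    has_wirtinger_derivs (\<lambda>b. f b + g b) j a (D1 + D2) (Db1 + Db2)"
  unfolding has_wirtinger_derivs_def
  by (auto intro!: derivative_eq_intros simp: algebra_simps)

lemma has_wirtinger_derivs_diff:
  "has_wirtinger_derivs f j a D1 Db1 \<Longrightarrow> has_wirtinger_derivs g j a D2 Db2 \<Longrightarrow>
    has_wirtinger_derivs (\<lambda>b. f b - g b) j a (D1 - D2) (Db1 - Db2)"
  unfolding has_wirtinger_derivs_def
  by (auto intro!: derivative_eq_intros simp: algebra_simps)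

lemma has_wirtinger_derivs_mult:
  "has_wirtinger_derivs f j a D1 Db1 \<Longrightarrow> has_wirtinger_derivs g j a D2 Db2 \<Longrightarrow>
    has_wirtinger_derivs (\<lambda>b. f b * g b) j a (f a * D2 + D1 * g a) (f a * Db2 + Db1 * g a)"
  unfolding has_wirtinger_derivs_def
  by (auto intro!: derivative_eq_intros simp: algebra_simps)

lemma has_wirtinger_derivs_uminus_arg:
  assumes "has_wirtinger_derivs f j (- a) D Db"
  shows "has_wirtinger_derivs (\<lambda>b. f (- b)) j a (- D) (- Db)"
  unfolding has_wirtinger_derivs_def
proof
  fix c :: complex
  assume "c \<in> {1, \<i>}"
  with assms have "((\<lambda>t. f ((- a)(j := (- a) j + c * of_real t)))
      has_vector_derivative c * D + cnj c * Db) (at 0)"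
    unfolding has_wirtinger_derivs_def by blast
  then have "((\<lambda>t. f ((- a)(j := (- a) j + c * of_real (- t))))
      has_vector_derivative - (c * D + cnj c * Db)) (at 0)"
    using vector_diff_chain_at[OF has_vector_derivative_minus[OF has_vector_derivative_id], where x=0]
    by (simp only: minus_zero comp_def scaleR_minus1_left)
  moreover have "(- a)(j := (- a) j + c * of_real (- t)) = - (a(j := a j + c * of_real t))" for t
    by (auto simp: fun_eq_iff)
  ultimately show "((\<lambda>t. f (- (a(j := a j + c * of_real t))))
      has_vector_derivative c * - D + cnj c * - Db) (at 0)"
    by (simp add: algebra_simps)
qed

lemma wirtinger_differentiable_indep: "(\<And>x. f (a(j := x)) = f a) \<Longrightarrow> wirtinger_differentiable f j a"
  and wirtinger_differentiable_coord: "wirtinger_differentiable (\<lambda>b. b k) j a"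
  and wirtinger_differentiable_cnj_coord: "wirtinger_differentiable (\<lambda>b. cnj (b k)) j a"
  unfolding wirtinger_differentiable_def
  using has_wirtinger_derivs_indep has_wirtinger_derivs_coord has_wirtinger_derivs_cnj_coord by blast+

lemma wirtinger_differentiable_diff:
  "wirtinger_differentiable f j a \<Longrightarrow> wirtinger_differentiable g j a \<Longrightarrow>
    wirtinger_differentiable (\<lambda>b. f b - g b) j a"
  and wirtinger_differentiable_mult:
  "wirtinger_differentiable f j a \<Longrightarrow> wirtinger_differentiable g j a \<Longrightarrow>
    wirtinger_differentiable (\<lambda>b. f b * g b) j a"
  unfolding wirtinger_differentiable_def
  using has_wirtinger_derivs_diff has_wirtinger_derivs_mult by blast+

definition depends_smoothly_on_first :: "nat \<Rightarrow> ((nat \<Rightarrow> complex) \<Rightarrow> complex) \<Rightarrow> bool" where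
  "depends_smoothly_on_first n f \<longleftrightarrow>
     (\<forall>j b. wirtinger_differentiable f j b) \<and> (\<forall>b k x. n \<le> k \<longrightarrow> f (b(k := x)) = f b)"

lemma depends_smoothly_on_first_Phi:
  "depends_smoothly_on_first n (\<lambda>b. Phi b n z)"
  "depends_smoothly_on_first n (\<lambda>b. PhiStar b n z)"
proof -
  have "wirtinger_differentiable (\<lambda>b. Phi b n z) j a \<and> wirtinger_differentiable (\<lambda>b. PhiStar b n z) j a"
    for j a
  proof (induction n)
    case 0
    show ?case by (simp add: wirtinger_differentiable_indep)
  next
    case (Suc n)
    then show ?case
      unfolding Phi_Suc PhiStar_Suc
      by (intro conjI wirtinger_differentiable_diff wirtinger_differentiable_mult
          wirtinger_differentiable_coord wirtinger_differentiable_cnj_coord)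
        (simp_all add: wirtinger_differentiable_indep)
  qed
  then show "depends_smoothly_on_first n (\<lambda>b. Phi b n z)"
    "depends_smoothly_on_first n (\<lambda>b. PhiStar b n z)"
    unfolding depends_smoothly_on_first_def by (auto simp: Phi_fun_upd PhiStar_fun_upd)
qed

lemma depends_smoothly_on_first_uminus_arg:
  assumes "depends_smoothly_on_first n f"
  shows "depends_smoothly_on_first n (\<lambda>b. f (- b))"
proof -
  have "- (b(k := x)) = (- b)(k := - x)" for b :: "nat \<Rightarrow> complex" and k x
    by (auto simp: fun_eq_iff)
  with assms show ?thesis
    unfolding depends_smoothly_on_first_def wirtinger_differentiable_def
    by (metis has_wirtinger_derivs_uminus_arg)
qed

lemma depends_smoothly_on_first_Psi:
  "depends_smoothly_on_first n (\<lambda>b. Psi b n z)"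
  "depends_smoothly_on_first n (\<lambda>b. PsiStar b n z)"
  unfolding Psi_eq_Phi_uminus PsiStar_eq_PhiStar_uminus
  using depends_smoothly_on_first_uminus_arg[OF depends_smoothly_on_first_Phi(1)]
    depends_smoothly_on_first_uminus_arg[OF depends_smoothly_on_first_Phi(2)] .

lemmas depends_smoothly_on_first_opuc =
  depends_smoothly_on_first_Phi depends_smoothly_on_first_Psi

lemma pbracket_Suc:
  "pbracket (Suc n) f g a = pbracket n f g a
     + \<i> * (1 - a n * cnj (a n)) * (wirt_bar f n a * wirt g n a - wirt f n a * wirt_bar g n a)"
  by (simp add: pbracket_def complex_norm_square[symmetric] del: of_real_power)

lemma pbracket_swap: "pbracket n g f a = - pbracket n f g a"
  unfolding pbracket_def by (simp add: sum_negf[symmetric] algebra_simps)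

lemma pbracket_self: "pbracket n f f a = 0"
  using pbracket_swap[of n f f a] by simp

lemma pbracket_linear_left:
  assumes "\<And>j. j < n \<Longrightarrow> wirtinger_differentiable f1 j a"
    and "\<And>j. j < n \<Longrightarrow> wirtinger_differentiable f2 j a"
    and "\<And>j x. j < n \<Longrightarrow> c (a(j := x)) = c a"
  shows "pbracket n (\<lambda>b. e * f1 b + c b * f2 b) g a = e * pbracket n f1 g a + c a * pbracket n f2 g a"
proof -
  have "wirt (\<lambda>b. e * f1 b + c b * f2 b) j a = e * wirt f1 j a + c a * wirt f2 j a \<and>
      wirt_bar (\<lambda>b. e * f1 b + c b * f2 b) j a = e * wirt_bar f1 j a + c a * wirt_bar f2 j a"
    if "j < n" for j
  proof -
    have "has_wirtinger_derivs (\<lambda>b. e) j a 0 0" and "has_wirtinger_derivs c j a 0 0"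
      using assms(3)[OF that] by (simp_all add: has_wirtinger_derivs_indep)
    from has_wirtinger_derivs_add[OF
        has_wirtinger_derivs_mult[OF this(1) wirtinger_differentiableD[OF assms(1)[OF that]]]
        has_wirtinger_derivs_mult[OF this(2) wirtinger_differentiableD[OF assms(2)[OF that]]]]
    show ?thesis by (simp add: has_wirtinger_derivs_wirt)
  qed
  then show ?thesis
    unfolding pbracket_def sum_distrib_left sum.distrib[symmetric]
    by (intro sum.cong) (simp_all add: algebra_simps)
qed

lemma pbracket_linear_right:
  assumes "\<And>j. j < n \<Longrightarrow> wirtinger_differentiable g1 j a"
    and "\<And>j. j < n \<Longrightarrow> wirtinger_differentiable g2 j a"
    and "\<And>j x. j < n \<Longrightarrow> c (a(j := x)) = c a"
  shows "pbracket n f (\<lambda>b. e * g1 b + c b * g2 b) a = e * pbracket n f g1 a + c a * pbracket n f g2 a"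
  by (simp add: pbracket_linear_left[OF assms] pbracket_swap[of n f])

lemma pbracket_Suc_step:
  fixes a :: "nat \<Rightarrow> complex" and \<gamma>1 \<delta>1 \<gamma>2 \<delta>2 :: complex
  assumes f1: "depends_smoothly_on_first n f1" and f2: "depends_smoothly_on_first n f2"
    and g1: "depends_smoothly_on_first n g1" and g2: "depends_smoothly_on_first n g2"
  defines "c \<equiv> \<gamma>1 * a n + \<delta>1 * cnj (a n)" and "d \<equiv> \<gamma>2 * a n + \<delta>2 * cnj (a n)"
  shows "pbracket (Suc n) (\<lambda>b. e1 * f1 b + (\<gamma>1 * b n + \<delta>1 * cnj (b n)) * f2 b)
      (\<lambda>b. e2 * g1 b + (\<gamma>2 * b n + \<delta>2 * cnj (b n)) * g2 b) a
    = e1 * e2 * pbracket n f1 g1 a + e1 * d * pbracket n f1 g2 a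
      + c * e2 * pbracket n f2 g1 a + c * d * pbracket n f2 g2 a
      + \<i> * (1 - a n * cnj (a n)) * (\<delta>1 * \<gamma>2 - \<gamma>1 * \<delta>2) * f2 a * g2 a"
proof -
  let ?f = "\<lambda>b. e1 * f1 b + (\<gamma>1 * b n + \<delta>1 * cnj (b n)) * f2 b"
  let ?g = "\<lambda>b. e2 * g1 b + (\<gamma>2 * b n + \<delta>2 * cnj (b n)) * g2 b"
  have top: "has_wirtinger_derivs (\<lambda>b. e * h1 b + (\<gamma> * b n + \<delta> * cnj (b n)) * h2 b) n a
      (\<gamma> * h2 a) (\<delta> * h2 a)"
    if "depends_smoothly_on_first n h1" "depends_smoothly_on_first n h2" for e \<gamma> \<delta> h1 h2
  proof -
    have "has_wirtinger_derivs h n a 0 0" if "depends_smoothly_on_first n h" for h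
      using that unfolding depends_smoothly_on_first_def by (simp add: has_wirtinger_derivs_indep)
    from has_wirtinger_derivs_add[OF
        has_wirtinger_derivs_mult[OF has_wirtinger_derivs_const this[OF that(1)]]
        has_wirtinger_derivs_mult[OF has_wirtinger_derivs_linear_coord this[OF that(2)]]]
    show ?thesis by simp
  qed
  have right: "pbracket n f ?g a = e2 * pbracket n f g1 a + d * pbracket n f g2 a" for f
    unfolding d_def using g1 g2
    by (intro pbracket_linear_right) (auto simp: depends_smoothly_on_first_def)
  have "pbracket n ?f ?g a = e1 * pbracket n f1 ?g a + c * pbracket n f2 ?g a"
    unfolding c_def using f1 f2
    by (intro pbracket_linear_left) (auto simp: depends_smoothly_on_first_def)
  then have "pbracket n ?f ?g a = e1 * e2 * pbracket n f1 g1 a + e1 * d * pbracket n f1 g2 a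
      + c * e2 * pbracket n f2 g1 a + c * d * pbracket n f2 g2 a"
    unfolding right[of f1] right[of f2] by (simp add: algebra_simps)
  then show ?thesis
    unfolding pbracket_Suc has_wirtinger_derivs_wirt[OF top[OF f1 f2]]
      has_wirtinger_derivs_wirt[OF top[OF g1 g2]]
    by (simp add: algebra_simps)
qed

lemma pbracket_uminus_arg:
  assumes "\<And>j. j < n \<Longrightarrow> wirtinger_differentiable f j (- a)"
    and "\<And>j. j < n \<Longrightarrow> wirtinger_differentiable g j (- a)"
  shows "pbracket n (\<lambda>b. f (- b)) (\<lambda>b. g (- b)) a = pbracket n f g (- a)"
proof -
  have "wirt (\<lambda>b. h (- b)) j a = - wirt h j (- a) \<and>
      wirt_bar (\<lambda>b. h (- b)) j a = - wirt_bar h j (- a)"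
    if "wirtinger_differentiable h j (- a)" for h j
    using has_wirtinger_derivs_uminus_arg[OF wirtinger_differentiableD[OF that]]
    by (simp add: has_wirtinger_derivs_wirt)
  with assms show ?thesis
    unfolding pbracket_def by (intro sum.cong) simp_all
qed

text \<open>The recursions in the shape required by \<open>pbracket_Suc_step\<close>: the partner polynomial
  is multiplied by the \<real>-linear function \<open>\<gamma> \<alpha>\<^sub>n + \<delta> \<alpha>\<^sub>n\<^sup>*\<close>, and the unit factors are
  written out so that the patterns match syntactically.\<close>

lemma Phi_Suc_fun:
    "(\<lambda>b. Phi b (Suc n) z) = (\<lambda>b. z * Phi b n z + (0 * b n + (- 1) * cnj (b n)) * PhiStar b n z)"
  and PhiStar_Suc_fun:
    "(\<lambda>b. PhiStar b (Suc n) z) = (\<lambda>b. 1 * PhiStar b n z + ((- z) * b n + 0 * cnj (b n)) * Phi b n z)"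
  and Psi_Suc_fun:
    "(\<lambda>b. Psi b (Suc n) z) = (\<lambda>b. z * Psi b n z + (0 * b n + 1 * cnj (b n)) * PsiStar b n z)"
  and PsiStar_Suc_fun:
    "(\<lambda>b. PsiStar b (Suc n) z) = (\<lambda>b. 1 * PsiStar b n z + (z * b n + 0 * cnj (b n)) * Psi b n z)"
  by (simp_all add: Phi_Suc PhiStar_Suc Psi_Suc PsiStar_Suc algebra_simps)

lemma Phi_brackets:
  "(z - w) * pbracket n (\<lambda>b. Phi b n z) (\<lambda>b. Phi b n w) a = 0 \<and>
   (z - w) * pbracket n (\<lambda>b. Phi b n z) (\<lambda>b. PhiStar b n w) a
     = \<i> * w * (Phi a n z * PhiStar a n w - PhiStar a n z * Phi a n w) \<and>
   (z - w) * pbracket n (\<lambda>b. PhiStar b n z) (\<lambda>b. PhiStar b n w) a = 0"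
proof (induction n arbitrary: z w)
  case 0
  show ?case by (simp add: pbracket_def)
next
  case (Suc n)
  have swap: "pbracket n (\<lambda>b. PhiStar b n z) (\<lambda>b. Phi b n w) a
      = - pbracket n (\<lambda>b. Phi b n w) (\<lambda>b. PhiStar b n z) a"
    by (rule pbracket_swap)
  from Suc.IH[of z w] Suc.IH[of w z] show ?case
    unfolding Phi_Suc_fun PhiStar_Suc_fun
    by (simp only: pbracket_Suc_step depends_smoothly_on_first_opuc swap Phi_Suc PhiStar_Suc)
      (elim conjE, intro conjI; algebra)
qed

lemma pbracket_Psi_eq_Phi_uminus:
  "pbracket n (\<lambda>b. Psi b n z) (\<lambda>b. Psi b n w) a = pbracket n (\<lambda>b. Phi b n z) (\<lambda>b. Phi b n w) (- a)"
  "pbracket n (\<lambda>b. PsiStar b n z) (\<lambda>b. PsiStar b n w) a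
    = pbracket n (\<lambda>b. PhiStar b n z) (\<lambda>b. PhiStar b n w) (- a)"
  unfolding Psi_eq_Phi_uminus PsiStar_eq_PhiStar_uminus
  using depends_smoothly_on_first_Phi
  by (auto simp: depends_smoothly_on_first_def intro: pbracket_uminus_arg)

lemma Phi_Psi_brackets:
  "2 * (z - w) * pbracket n (\<lambda>b. Phi b n z) (\<lambda>b. Psi b n w) a
     = - \<i> * (z - w) * (Phi a n z * Phi a n w - Psi a n z * Psi a n w)
       - \<i> * (z + w) * (Phi a n z * Psi a n w - Psi a n z * Phi a n w) \<and>
   2 * (z - w) * pbracket n (\<lambda>b. Phi b n z) (\<lambda>b. PsiStar b n w) a
     = \<i> * (z - w) * (Phi a n z * PhiStar a n w - Phi a n z * PsiStar a n w + Psi a n z * PsiStar a n w)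
       + 2 * \<i> * w * PhiStar a n z * Psi a n w - \<i> * (z + w) * Psi a n z * PhiStar a n w \<and>
   2 * (z - w) * pbracket n (\<lambda>b. PhiStar b n z) (\<lambda>b. Psi b n w) a
     = - \<i> * (z - w) * (PhiStar a n z * Phi a n w - PhiStar a n z * Psi a n w + PsiStar a n z * Psi a n w)
       + 2 * \<i> * z * Phi a n z * PsiStar a n w - \<i> * (z + w) * PsiStar a n z * Phi a n w \<and>
   2 * (z - w) * pbracket n (\<lambda>b. PhiStar b n z) (\<lambda>b. PsiStar b n w) a
     = \<i> * (z - w) * (PhiStar a n z * PhiStar a n w - PsiStar a n z * PsiStar a n w)
       - \<i> * (z + w) * (PhiStar a n z * PsiStar a n w - PsiStar a n z * PhiStar a n w)"
proof (induction n)
  case 0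
  show ?case by (simp add: pbracket_def Psi_eq_Phi_uminus PsiStar_eq_PhiStar_uminus algebra_simps)
next
  case (Suc n)
  then show ?case
    unfolding Phi_Suc_fun PhiStar_Suc_fun Psi_Suc_fun PsiStar_Suc_fun
    by (simp only: pbracket_Suc_step depends_smoothly_on_first_opuc
        Phi_Suc PhiStar_Suc Psi_Suc PsiStar_Suc)
      (elim conjE, intro conjI; algebra)
qed

theorem theorem13p4:
  fixes n :: nat and a :: "nat \<Rightarrow> complex" and z w :: complex
  assumes "n \<ge> 1" and "\<forall>j<n. norm (a j) < 1"
  shows "pbracket n (\<lambda>b. Phi b n z) (\<lambda>b. Phi b n w) a = 0
    \<and> pbracket n (\<lambda>b. Psi b n z) (\<lambda>b. Psi b n w) a = 0
    \<and> pbracket n (\<lambda>b. PhiStar b n z) (\<lambda>b. PhiStar b n w) a = 0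
    \<and> pbracket n (\<lambda>b. PsiStar b n z) (\<lambda>b. PsiStar b n w) a = 0
    \<and> (z \<noteq> w \<longrightarrow>
        pbracket n (\<lambda>b. PhiStar b n z) (\<lambda>b. PsiStar b n w) a =
          - (\<i> / 2) * ((PhiStar a n z * PsiStar a n w - PsiStar a n z * PhiStar a n w) * ((z + w) / (z - w))
                       - PhiStar a n z * PhiStar a n w + PsiStar a n z * PsiStar a n w))
    \<and> (z \<noteq> w \<longrightarrow>
        pbracket n (\<lambda>b. Phi b n z) (\<lambda>b. Psi b n w) a =
          - (\<i> / 2) * ((Phi a n z * Psi a n w - Psi a n z * Phi a n w) * ((z + w) / (z - w))
                       + Phi a n z * Phi a n w - Psi a n z * Psi a n w))"
proof -
  have "pbracket n (\<lambda>b. Phi b n z) (\<lambda>b. Phi b n w) b = 0"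
    and "pbracket n (\<lambda>b. PhiStar b n z) (\<lambda>b. PhiStar b n w) b = 0" for b
    using Phi_brackets[of z w n b] by (cases "z = w"; simp add: pbracket_self)+
  then show ?thesis
    using Phi_Psi_brackets[of z w n a]
    by (auto simp: pbracket_Psi_eq_Phi_uminus field_simps)
qed

end
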